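(* Let $Q(k_1,\dots,k_d)$ be a positive definite diagonal quadratic form in $d\ge2$ variables with integer coefficients, and let $r_Q(n)$ denote the number of integral representations $Q(k_1,\dots,k_d)=n$. Then for every sufficiently small $\delta>0$ there is a constant $C_{d,\delta}$, depending only on $d$ and $\delta$ (and independent of the coefficients of $Q$ and of $n$), such that $r_Q(n)\le C_{d,\delta}\, n^{d/2-1+\delta}$ for all $n\in\mathbb N$. *)

theory Defs
  imports Complex_Main
begin

definition rQ :: "int list \<Rightarrow> nat \<Rightarrow> nat" where
  "rQ as n = card {ks :: int list. length ks = length as \<and>
      (\<Sum>i<length as. as ! i * (ks ! i)^2) = int n}"

end

theory Submission
  imports Defs "HOL-Computational_Algebra.Primes"
begin

text \<open>
  For two variables, the composition identity
  \<open>(a x\<^sub>0 x + b y\<^sub>0 y)\<^sup>2 + a b (x\<^sub>0 y - y\<^sub>0 x)\<^sup>2 = (a x\<^sub>0\<^sup>2 + b y\<^sub>0\<^sup>2)(a x\<^sup>2 + b y\<^sup>2)\<close>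
  injects the representations of \<open>m\<close> by \<open>a x\<^sup>2 + b y\<^sup>2\<close> into those of \<open>m\<^sup>2\<close> by the principal
  form \<open>x\<^sup>2 + a b y\<^sup>2\<close>. A representation of \<open>N\<close> by \<open>x\<^sup>2 + D y\<^sup>2\<close> is \<open>c\<close> times a primitive
  representation of \<open>N / c\<^sup>2\<close>. Fixing one primitive representation \<open>(x\<^sub>0, y\<^sub>0)\<close> of \<open>M\<close>, the
  primitive representations are sorted into at most \<open>\<tau>(M)\<^sup>3\<close> classes by the gcds of
  \<open>x y\<^sub>0 - x\<^sub>0 y\<close>, \<open>x y\<^sub>0 + x\<^sub>0 y\<close> and \<open>x\<close> with \<open>M\<close>; within a class \<open>M\<^sup>2\<close> divides
  \<open>4 D (x y' - x' y)\<^sup>2\<close>, which leaves at most 15 points per class. With \<open>\<tau>(n) = O(n\<^sup>\<epsilon>)\<close> this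
  bounds the number of representations by a binary form by \<open>C\<^sub>\<delta> m\<^sup>\<delta>\<close>, uniformly in the
  coefficients. In \<open>d\<close> variables, each of the first \<open>d - 2\<close> coordinates takes at most
  \<open>3 \<surd>n\<close> values, and the last two are counted by the binary bound.
\<close>

definition divisor_count :: "nat \<Rightarrow> nat" where
  "divisor_count n = card {d. d dvd n}"

lemma divisor_count_mult_le:
  assumes "a > 0" "b > 0"
  shows "divisor_count (a * b) \<le> divisor_count a * divisor_count b"
proof -
  have fin: "finite ({d. d dvd a} \<times> {d. d dvd b})"
    using assms by simp
  have "{d. d dvd a * b} \<subseteq> (\<lambda>(d1, d2). d1 * d2) ` ({d. d dvd a} \<times> {d. d dvd b})"
    by (auto dest!: division_decomp)
  then have "divisor_count (a * b) \<le> card ((\<lambda>(d1, d2). d1 * d2) ` ({d. d dvd a} \<times> {d. d dvd b}))"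
    unfolding divisor_count_def using fin by (intro card_mono) auto
  also have "\<dots> \<le> card ({d. d dvd a} \<times> {d. d dvd b})"
    using fin by (rule card_image_le)
  finally show ?thesis
    by (simp add: divisor_count_def card_cartesian_product)
qed

lemma divisor_count_prime_power_le:
  assumes "prime p"
  shows "divisor_count (p ^ k) \<le> k + 1"
proof -
  have "{d. d dvd p ^ k} \<subseteq> (\<lambda>i. p ^ i) ` {..k}"
    using divides_primepow_nat[OF assms] by auto
  then have "divisor_count (p ^ k) \<le> card ((\<lambda>i. p ^ i) ` {..k})"
    unfolding divisor_count_def by (intro card_mono) auto
  also have "\<dots> \<le> k + 1"
    using card_image_le[of "{..k}" "\<lambda>i. p ^ i"] by simp
  finally show ?thesis .
qed

lemma divisor_count_dvd_mono:
  assumes "m dvd n" "n > 0"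
  shows "divisor_count m \<le> divisor_count n"
  unfolding divisor_count_def using assms by (intro card_mono) (auto intro: dvd_trans)

lemma divisor_count_prime_power_mult_le:
  assumes "prime p" "m > 0"
  shows "divisor_count (p ^ k * m) \<le> (k + 1) * divisor_count m"
proof -
  have "divisor_count (p ^ k * m) \<le> divisor_count (p ^ k) * divisor_count m"
    using assms by (intro divisor_count_mult_le) (simp_all add: prime_gt_0_nat)
  also have "\<dots> \<le> (k + 1) * divisor_count m"
    by (intro mult_right_mono divisor_count_prime_power_le[OF assms(1)]) simp
  finally show ?thesis .
qed

lemma prime_power_factor_split:
  fixes n :: nat
  assumes "n > 1"
  obtains p k m where "prime p" "k > 0" "\<not> p dvd m" "n = p ^ k * m" "m > 0" "m < n"
proof -
  obtain p where p: "prime p" "p dvd n"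
    using assms prime_factor_nat[of n] by auto
  define k where "k = multiplicity p n"
  obtain m where nm: "n = p ^ k * m" and "\<not> p dvd m"
    using multiplicity_decompose'[of n p] assms p(1) unfolding k_def
    by (metis not_prime_unit not_one_less_zero)
  have "k > 0"
    using nm p(2) \<open>\<not> p dvd m\<close> by (cases k) auto
  have "m > 0"
    using nm assms by (cases m) auto
  have "1 < p ^ k"
    using prime_gt_1_nat[OF p(1)] \<open>k > 0\<close> by (rule one_less_power)
  then have "m < n"
    using nm \<open>m > 0\<close> by simp
  with that p(1) \<open>k > 0\<close> \<open>\<not> p dvd m\<close> nm \<open>m > 0\<close> show ?thesis
    by blast
qed

lemma divisor_count_le_small_factors_powr:
  fixes \<epsilon> B :: real and P0 :: nat
  assumes "B \<ge> 1"
    and large: "\<And>p k. prime p \<Longrightarrow> p \<ge> P0 \<Longrightarrow> real k + 1 \<le> real p powr (real k * \<epsilon>)"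
    and small: "\<And>p k. prime p \<Longrightarrow> real k + 1 \<le> B * real p powr (real k * \<epsilon>)"
    and "n > 0"
  shows "real (divisor_count n) \<le> B ^ card {p. prime p \<and> p dvd n \<and> p < P0} * real n powr \<epsilon>"
  using \<open>n > 0\<close>
proof (induction n rule: less_induct)
  case (less n)
  let ?S = "\<lambda>n. {p. prime p \<and> p dvd n \<and> p < P0}"
  show ?case
  proof (cases "n = 1")
    case True
    then show ?thesis
      using \<open>B \<ge> 1\<close> by (simp add: divisor_count_def)
  next
    case False
    with less.prems have "n > 1"
      by simp
    then obtain p k m where p: "prime p" and "k > 0" "\<not> p dvd m" and nm: "n = p ^ k * m"
      and "m > 0" "m < n"
      by (rule prime_power_factor_split)
    define w where "w = (if p < P0 then B else 1)"
    have S_n: "?S n = (if p < P0 then insert p (?S m) else ?S m)"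
      using nm \<open>k > 0\<close> p(1) by (auto simp: prime_dvd_mult_iff prime_dvd_power_iff dest: primes_dvd_imp_eq)
    have "finite (?S m)"
      by (rule finite_subset[of _ "{..<P0}"]) auto
    moreover have "p \<notin> ?S m"
      using \<open>\<not> p dvd m\<close> by simp
    ultimately have "card (insert p (?S m)) = Suc (card (?S m))"
      by (rule card_insert_disjoint)
    then have card_S: "B ^ card (?S n) = w * B ^ card (?S m)"
      by (simp add: S_n w_def)
    have powr_n: "real n powr \<epsilon> = real p powr (real k * \<epsilon>) * real m powr \<epsilon>"
      using prime_gt_0_nat[OF p(1)] by (simp add: nm powr_mult powr_realpow[symmetric] powr_powr)
    have factor: "real k + 1 \<le> w * real p powr (real k * \<epsilon>)"
      using large[OF p(1)] small[OF p(1)] by (simp add: w_def not_less)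
    have "divisor_count n \<le> (k + 1) * divisor_count m"
      unfolding nm using p(1) \<open>m > 0\<close> by (rule divisor_count_prime_power_mult_le)
    then have "real (divisor_count n) \<le> real ((k + 1) * divisor_count m)"
      by (simp only: of_nat_le_iff)
    then have "real (divisor_count n) \<le> (real k + 1) * real (divisor_count m)"
      by (simp add: algebra_simps)
    also have "\<dots> \<le> (w * real p powr (real k * \<epsilon>)) * (B ^ card (?S m) * real m powr \<epsilon>)"
      using \<open>B \<ge> 1\<close> factor less.IH[OF \<open>m < n\<close> \<open>m > 0\<close>] by (intro mult_mono) (auto simp: w_def)
    also have "\<dots> = B ^ card (?S n) * real n powr \<epsilon>"
      using powr_n by (simp only: card_S mult_ac)
    finally show ?thesis .
  qed
qed

lemma succ_le_powr_large_base:
  fixes p \<epsilon> :: real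
  assumes "\<epsilon> > 0" "p \<ge> 2 powr (1 / \<epsilon>)"
  shows "real k + 1 \<le> p powr (real k * \<epsilon>)"
proof -
  have "p > 0"
    using assms(2) powr_gt_zero[of 2 "1 / \<epsilon>"] by linarith
  have "(2 powr (1 / \<epsilon>)) powr \<epsilon> \<le> p powr \<epsilon>"
    using assms by (intro powr_mono2) auto
  then have "2 \<le> p powr \<epsilon>"
    using assms(1) by (simp add: powr_powr)
  have "Suc k \<le> 2 ^ k"
    using less_exp[of k] by (rule Suc_leI)
  then have "real k + 1 \<le> 2 ^ k"
    using of_nat_le_iff[of "Suc k" "2 ^ k", where 'a = real] by simp
  also have "\<dots> \<le> (p powr \<epsilon>) ^ k"
    using \<open>2 \<le> p powr \<epsilon>\<close> by (intro power_mono) auto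
  also have "\<dots> = p powr (real k * \<epsilon>)"
    using \<open>p > 0\<close> by (simp add: powr_realpow[symmetric] powr_powr mult.commute)
  finally show ?thesis .
qed

lemma succ_le_const_mult_powr:
  fixes p \<epsilon> :: real
  assumes "\<epsilon> > 0" "p \<ge> 2"
  shows "real k + 1 \<le> (1 + 1 / (\<epsilon> * ln 2)) * p powr (real k * \<epsilon>)"
proof -
  define c where "c = \<epsilon> * ln 2"
  have "c > 0"
    using assms(1) by (simp add: c_def)
  have "1 + real k * c \<le> exp (real k * c)"
    by (rule exp_ge_add_one_self)
  also have "\<dots> = 2 powr (real k * \<epsilon>)"
    by (simp add: c_def powr_def mult_ac)
  also have "\<dots> \<le> p powr (real k * \<epsilon>)"
    using assms by (intro powr_mono2) auto
  finally have "1 + real k * c \<le> p powr (real k * \<epsilon>)" .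
  moreover have "real k + 1 \<le> (1 + 1 / c) * (1 + real k * c)"
    using \<open>c > 0\<close> by (simp add: field_simps)
  ultimately show ?thesis
    using \<open>c > 0\<close> unfolding c_def by (smt (verit) divide_pos_pos mult_left_mono)
qed

lemma divisor_count_le_powr:
  fixes \<epsilon> :: real
  assumes "\<epsilon> > 0"
  shows "\<exists>C>0. \<forall>n>0. real (divisor_count n) \<le> C * real n powr \<epsilon>"
proof -
  define P0 where "P0 = nat \<lceil>2 powr (1 / \<epsilon>)\<rceil>"
  define B where "B = 1 + 1 / (\<epsilon> * ln 2)"
  have "B \<ge> 1"
    using assms by (simp add: B_def)
  have bound: "real (divisor_count n) \<le> B ^ card {p. prime p \<and> p dvd n \<and> p < P0} * real n powr \<epsilon>"
    if "n > 0" for n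
  proof (rule divisor_count_le_small_factors_powr[OF \<open>B \<ge> 1\<close> _ _ that])
    fix p k :: nat
    assume "prime p"
    then show "real k + 1 \<le> B * real p powr (real k * \<epsilon>)"
      unfolding B_def using assms prime_ge_2_nat by (intro succ_le_const_mult_powr) auto
    assume "p \<ge> P0"
    then show "real k + 1 \<le> real p powr (real k * \<epsilon>)"
      unfolding P0_def using assms by (intro succ_le_powr_large_base) auto
  qed
  have "B ^ card {p. prime p \<and> p dvd n \<and> p < P0} \<le> B ^ P0" for n
    using \<open>B \<ge> 1\<close> card_mono[of "{..<P0}" "{p. prime p \<and> p dvd n \<and> p < P0}"]
    by (intro power_increasing) auto
  then have "real (divisor_count n) \<le> B ^ P0 * real n powr \<epsilon>" if "n > 0" for n
    using bound[OF that] by (meson mult_right_mono order_trans powr_ge_zero)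
  moreover have "B ^ P0 > 0"
    using \<open>B \<ge> 1\<close> by simp
  ultimately show ?thesis
    by blast
qed

lemma card_pos_divisors_int:
  fixes N :: int
  assumes "N > 0"
  shows "card {c. 0 < c \<and> c dvd N} = divisor_count (nat N)"
proof -
  have "{c. 0 < c \<and> c dvd N} = int ` {d. d dvd nat N}"
  proof (intro equalityI subsetI)
    fix c
    assume "c \<in> {c. 0 < c \<and> c dvd N}"
    then have "c = int (nat c)" "nat c dvd nat N"
      using assms by (auto simp: nat_dvd_iff)
    then show "c \<in> int ` {d. d dvd nat N}"
      by blast
  next
    fix c
    assume "c \<in> int ` {d. d dvd nat N}"
    then obtain d where "c = int d" "int d dvd N"
      using assms by (auto simp flip: int_dvd_int_iff)
    then show "c \<in> {c. 0 < c \<and> c dvd N}"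
      using assms by (auto intro!: Nat.gr0I)
  qed
  then show ?thesis
    by (simp add: card_image divisor_count_def)
qed

lemma finite_pos_divisors_int: "N > 0 \<Longrightarrow> finite {c::int. 0 < c \<and> c dvd N}"
  by (rule finite_subset[of _ "{1..N}"]) (auto dest: zdvd_imp_le)

lemma squares_le_subset: "{k::int. k^2 \<le> n} \<subseteq> {-\<lfloor>sqrt (real_of_int n)\<rfloor>..\<lfloor>sqrt (real_of_int n)\<rfloor>}"
proof
  fix k :: int
  assume "k \<in> {k. k^2 \<le> n}"
  then have "real_of_int k ^ 2 \<le> real_of_int n"
    by (simp flip: of_int_power)
  then have "\<bar>real_of_int k\<bar> \<le> sqrt (real_of_int n)"
    using real_sqrt_le_mono[of "real_of_int k ^ 2"] by simp
  then have "\<bar>k\<bar> \<le> \<lfloor>sqrt (real_of_int n)\<rfloor>"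
    by (simp add: le_floor_iff)
  then show "k \<in> {-\<lfloor>sqrt (real_of_int n)\<rfloor>..\<lfloor>sqrt (real_of_int n)\<rfloor>}"
    by (simp add: abs_le_iff)
qed

lemma finite_squares_le: "finite {k::int. k^2 \<le> n}"
  using squares_le_subset by (rule finite_subset) simp

lemma card_squares_le:
  assumes "n \<ge> 1"
  shows "real (card {k::int. k^2 \<le> n}) \<le> 3 * sqrt (real_of_int n)"
proof -
  define s where "s = \<lfloor>sqrt (real_of_int n)\<rfloor>"
  have "1 \<le> sqrt (real_of_int n)"
    using assms by simp
  then have "s \<ge> 1"
    by (simp add: s_def le_floor_iff)
  have "card {k::int. k^2 \<le> n} \<le> card {-s..s}"
    using squares_le_subset unfolding s_def by (intro card_mono) simp_all
  also have "card {-s..s} = nat (2 * s + 1)"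
    by simp
  finally have "real (card {k::int. k^2 \<le> n}) \<le> 2 * real_of_int s + 1"
    using \<open>s \<ge> 1\<close> by linarith
  also have "\<dots> \<le> 3 * sqrt (real_of_int n)"
    using \<open>1 \<le> sqrt (real_of_int n)\<close> of_int_floor_le[of "sqrt (real_of_int n)"] unfolding s_def by linarith
  finally show ?thesis .
qed

definition binary_reps :: "int \<Rightarrow> int \<Rightarrow> int \<Rightarrow> (int \<times> int) set" where
  "binary_reps a b n = {(x, y). a * x^2 + b * y^2 = n}"

lemma binary_reps_subset_squares:
  assumes "a > 0" "b > 0"
  shows "binary_reps a b n \<subseteq> {k. k^2 \<le> n} \<times> {k. k^2 \<le> n}"
proof
  fix z
  assume "z \<in> binary_reps a b n"
  then obtain x y where z: "z = (x, y)" and rep: "a * x^2 + b * y^2 = n"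
    by (auto simp: binary_reps_def)
  have "x^2 \<le> a * x^2" "y^2 \<le> b * y^2" "0 \<le> a * x^2" "0 \<le> b * y^2"
    using assms by (simp_all add: mult_le_cancel_right1)
  then show "z \<in> {k. k^2 \<le> n} \<times> {k. k^2 \<le> n}"
    using z rep by simp
qed

lemma finite_binary_reps: "a > 0 \<Longrightarrow> b > 0 \<Longrightarrow> finite (binary_reps a b n)"
  using binary_reps_subset_squares finite_squares_le by (metis finite_SigmaI finite_subset)

lemma card_binary_reps_nonpos:
  assumes "a > 0" "b > 0" "n \<le> 0"
  shows "card (binary_reps a b n) \<le> 1"
proof -
  have "binary_reps a b n \<subseteq> {(0, 0)}"
  proof
    fix z
    assume "z \<in> binary_reps a b n"
    then obtain x y where z: "z = (x, y)" and rep: "a * x^2 + b * y^2 = n"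
      by (auto simp: binary_reps_def)
    have "0 \<le> a * x^2" "0 \<le> b * y^2"
      using assms by simp_all
    then have "a * x^2 = 0" "b * y^2 = 0"
      using rep assms(3) by linarith+
    then show "z \<in> {(0, 0)}"
      using z assms by simp
  qed
  then show ?thesis
    using card_mono[of "{(0::int, 0::int)}"] by fastforce
qed

lemma binary_composition_identity:
  fixes a b x0 y0 x y :: "'a :: comm_ring_1"
  shows "(a * x0 * x + b * y0 * y)^2 + a * b * (x0 * y - y0 * x)^2
    = (a * x0^2 + b * y0^2) * (a * x^2 + b * y^2)"
  by (simp add: power2_eq_square algebra_simps)

lemma inj_binary_composition:
  fixes a b x0 y0 :: "'a :: idom"
  assumes "a * x0^2 + b * y0^2 \<noteq> 0"
  shows "inj (\<lambda>(x, y). (a * x0 * x + b * y0 * y, x0 * y - y0 * x))"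
proof (rule injI, clarify)
  fix x y x' y' :: 'a
  assume t: "a * x0 * x + b * y0 * y = a * x0 * x' + b * y0 * y'"
    and w: "x0 * y - y0 * x = x0 * y' - y0 * x'"
  let ?n = "a * x0^2 + b * y0^2"
  have "?n * x = x0 * (a * x0 * x + b * y0 * y) - b * y0 * (x0 * y - y0 * x)"
    "?n * y = y0 * (a * x0 * x + b * y0 * y) + a * x0 * (x0 * y - y0 * x)"
    "?n * x' = x0 * (a * x0 * x' + b * y0 * y') - b * y0 * (x0 * y' - y0 * x')"
    "?n * y' = y0 * (a * x0 * x' + b * y0 * y') + a * x0 * (x0 * y' - y0 * x')"
    by (simp_all add: power2_eq_square algebra_simps)
  then have "?n * x = ?n * x'" "?n * y = ?n * y'"
    using t w by simp_all
  then show "x = x' \<and> y = y'"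
    using assms by simp
qed

lemma card_binary_reps_le_principal:
  fixes a b n :: int
  assumes "a > 0" "b > 0" "n \<noteq> 0"
  shows "card (binary_reps a b n) \<le> card (binary_reps 1 (a * b) (n^2))"
proof (cases "binary_reps a b n = {}")
  case False
  then obtain x0 y0 where rep0: "a * x0^2 + b * y0^2 = n"
    by (auto simp: binary_reps_def)
  let ?\<phi> = "\<lambda>(x, y). (a * x0 * x + b * y0 * y, x0 * y - y0 * x)"
  have "inj ?\<phi>"
    using assms(3) rep0 by (intro inj_binary_composition) simp
  moreover have "?\<phi> ` binary_reps a b n \<subseteq> binary_reps 1 (a * b) (n^2)"
    using binary_composition_identity[of a x0 _ b y0] rep0
    by (auto simp: binary_reps_def power2_eq_square)
  moreover have "finite (binary_reps 1 (a * b) (n^2))"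
    using assms by (intro finite_binary_reps) simp_all
  ultimately show ?thesis
    by (meson card_inj_on_le inj_on_subset subset_UNIV)
qed simp

lemma scaled_circle_quotient_le:
  fixes D M t w :: int
  assumes "D \<ge> 0" "M > 0" "M dvd 2 * t" "t^2 + D * w^2 = M^2"
  shows "\<bar>2 * t div M\<bar> \<le> 2"
proof -
  have "0 \<le> D * w^2"
    using assms(1) by simp
  then have "t^2 \<le> M^2"
    using assms(4) by linarith
  then have "\<bar>2 * t\<bar> \<le> 2 * M"
    using assms(2) abs_le_square_iff[of t M] by simp
  moreover have "2 * t = (2 * t div M) * M"
    using assms(3) by simp
  ultimately have "\<bar>2 * t div M\<bar> * M \<le> 2 * M"
    using assms(2) by (metis abs_mult abs_of_pos)
  then show ?thesis
    using assms(2) by simp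
qed

text \<open>A point is determined by \<open>2 t / M \<in> {-2..2}\<close> and the sign of \<open>w\<close>, since \<open>D w\<^sup>2 = M\<^sup>2 - t\<^sup>2\<close>.\<close>

lemma scaled_circle_points:
  fixes D M :: int
  assumes "D > 0" "M > 0"
  defines "S \<equiv> {(t, w). M dvd 2 * t \<and> t^2 + D * w^2 = M^2}"
  shows "finite S" "card S \<le> 15"
proof -
  let ?\<kappa> = "\<lambda>(t, w). (2 * t div M, sgn w)"
  have "?\<kappa> z \<in> {-2..2} \<times> {-1..1}" if "z \<in> S" for z
  proof -
    obtain t w where "z = (t, w)" "M dvd 2 * t" "t^2 + D * w^2 = M^2"
      using \<open>z \<in> S\<close> by (auto simp: S_def)
    moreover from this have "\<bar>2 * t div M\<bar> \<le> 2"
      using assms(1,2) by (intro scaled_circle_quotient_le) simp_all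
    ultimately show ?thesis
      by (simp add: sgn_if) arith
  qed
  then have image: "?\<kappa> ` S \<subseteq> {-2..2} \<times> {-1..1}"
    by blast
  have inj: "inj_on ?\<kappa> S"
  proof (rule inj_onI)
    fix z z'
    assume "z \<in> S" "z' \<in> S" "?\<kappa> z = ?\<kappa> z'"
    moreover obtain t w t' w' where z: "z = (t, w)" "z' = (t', w')"
      by fastforce
    ultimately have "M dvd 2 * t" "M dvd 2 * t'"
      and circle: "t^2 + D * w^2 = M^2" "t'^2 + D * w'^2 = M^2"
      and "2 * t div M = 2 * t' div M" "sgn w = sgn w'"
      unfolding S_def by auto
    then have "2 * t = 2 * t'"
      using \<open>M dvd 2 * t\<close> \<open>M dvd 2 * t'\<close> by (metis dvd_div_mult_self)
    then have "t = t'"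
      by simp
    then have "D * w^2 = D * w'^2"
      using circle by (metis add_left_cancel)
    then have "\<bar>w\<bar> = \<bar>w'\<bar>"
      using assms(1) by (auto simp: power2_eq_iff)
    then have "w = w'"
      using \<open>sgn w = sgn w'\<close> by (metis sgn_mult_abs)
    with \<open>t = t'\<close> show "z = z'"
      using z by simp
  qed
  have box: "finite ({-2..2::int} \<times> {-1..1::int})"
    by simp
  show "finite S"
    using inj image box by (rule inj_on_finite)
  have "card S \<le> card ({-2..2::int} \<times> {-1..1::int})"
    using inj image box by (rule card_inj_on_le)
  then show "card S \<le> 15"
    by simp
qed

lemma card_le_15_if_cross_dvd:
  fixes D M :: int
  assumes "D > 0" "M > 0" "F \<subseteq> binary_reps 1 D M"
    and cross: "\<And>x y x' y'. (x, y) \<in> F \<Longrightarrow> (x', y') \<in> F \<Longrightarrow> M^2 dvd 4 * D * (x * y' - x' * y)^2"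
  shows "card F \<le> 15"
proof (cases "F = {}")
  case False
  then obtain x0 y0 where "(x0, y0) \<in> F"
    by auto
  then have rep0: "x0^2 + D * y0^2 = M"
    using assms(3) by (auto simp: binary_reps_def)
  let ?\<phi> = "\<lambda>(x, y). (x0 * x + D * y0 * y, x0 * y - y0 * x)"
  let ?S = "{(t, w). M dvd 2 * t \<and> t^2 + D * w^2 = M^2}"
  have "inj ?\<phi>"
    using inj_binary_composition[of 1 x0 D y0] rep0 assms(2) by simp
  moreover have "?\<phi> ` F \<subseteq> ?S"
  proof clarify
    fix x y
    assume "(x, y) \<in> F"
    define t where "t = x0 * x + D * y0 * y"
    define w where "w = x0 * y - y0 * x"
    have "x^2 + D * y^2 = M"
      using \<open>(x, y) \<in> F\<close> assms(3) by (auto simp: binary_reps_def)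
    then have circle: "t^2 + D * w^2 = M^2"
      using binary_composition_identity[of 1 x0 x D y0 y] rep0
      by (simp add: t_def w_def power2_eq_square)
    have "M^2 dvd 4 * D * w^2"
      using cross[OF \<open>(x0, y0) \<in> F\<close> \<open>(x, y) \<in> F\<close>] by (simp add: w_def mult.commute)
    then have "M^2 dvd 4 * M^2 - 4 * D * w^2"
      by simp
    also have "4 * M^2 - 4 * D * w^2 = (2 * t)^2"
      using circle by (simp add: algebra_simps)
    finally have "M^2 dvd (2 * t)^2" .
    then have "M dvd 2 * t"
      using pow_divides_pow_iff[of 2 M "2 * t"] by simp
    with circle show "M dvd 2 * (x0 * x + D * y0 * y) \<and>
        (x0 * x + D * y0 * y)^2 + D * (x0 * y - y0 * x)^2 = M^2"
      by (simp add: t_def w_def)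
  qed
  ultimately have "card F \<le> card ?S"
    using scaled_circle_points[OF assms(1,2)] by (intro card_inj_on_le) (auto intro: inj_on_subset)
  also have "\<dots> \<le> 15"
    using scaled_circle_points[OF assms(1,2)] by simp
  finally show ?thesis .
qed simp

lemma dvd_gcd_mult_gcd:
  fixes M u v :: int
  assumes "M dvd u * v"
  shows "M dvd gcd u M * gcd v M"
proof -
  have "M dvd gcd (u * v) (u * M)"
    using assms by simp
  also have "gcd (u * v) (u * M) = \<bar>u * gcd v M\<bar>"
    by (simp add: abs_mult gcd_mult_distrib_int)
  finally have "M dvd u * gcd v M"
    by simp
  then have "M dvd gcd (gcd v M * u) (gcd v M * M)"
    by (simp add: mult.commute)
  then show ?thesis
    by (metis abs_gcd_int gcd_mult_distrib_int mult.commute)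
qed

lemma dvd_mult_if_dvd_mult_divisors:
  fixes M g h c e :: int
  assumes "M dvd g * h" "g dvd c" "h dvd c" "gcd g h dvd e"
  shows "M dvd e * c"
proof -
  have "M dvd gcd g h * lcm g h"
    using assms(1) prod_gcd_lcm_int[of g h] by (metis abs_mult dvd_abs_iff)
  also have "gcd g h * lcm g h dvd e * c"
    using assms(2-4) by (intro mult_dvd_mono) simp_all
  finally show ?thesis .
qed

lemma multiplicity_le_if_sum_sq:
  fixes X Y D M p :: int
  assumes M: "M = X^2 + D * Y^2" and "D \<noteq> 0" "coprime Y M" "prime p" "p dvd M"
    and "p ^ k dvd X" "multiplicity p D < 2 * k"
  shows "multiplicity p M \<le> multiplicity p D"
proof (rule ccontr)
  define \<beta> where "\<beta> = multiplicity p D"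
  assume "\<not> multiplicity p M \<le> multiplicity p D"
  then have "p ^ Suc \<beta> dvd M"
    unfolding \<beta>_def by (intro multiplicity_dvd') simp
  moreover have "p ^ Suc \<beta> dvd X^2"
  proof -
    have "p ^ Suc \<beta> dvd p ^ (k * 2)"
      using assms(7) by (intro le_imp_power_dvd) (simp add: \<beta>_def)
    also have "\<dots> = (p ^ k)^2"
      by (rule power_mult)
    also have "\<dots> dvd X^2"
      using assms(6) by simp
    finally show ?thesis .
  qed
  ultimately have "p ^ Suc \<beta> dvd M - X^2"
    by (rule dvd_diff)
  also have "M - X^2 = D * Y^2"
    using M by simp
  finally have "p ^ Suc \<beta> dvd D * Y^2" .
  have "\<not> is_unit p"
    using \<open>prime p\<close> not_prime_unit by blast
  then have "\<not> p dvd Y"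
    using \<open>coprime Y M\<close> \<open>p dvd M\<close> coprime_common_divisor by blast
  then have "coprime (p ^ Suc \<beta>) (Y^2)"
    using \<open>prime p\<close> by (simp add: prime_imp_coprime)
  with \<open>p ^ Suc \<beta> dvd D * Y^2\<close> have "p ^ Suc \<beta> dvd D"
    by (simp add: coprime_dvd_mult_left_iff)
  then show False
    using power_dvd_iff_le_multiplicity[of D p "Suc \<beta>"] \<open>D \<noteq> 0\<close> \<open>\<not> is_unit p\<close>
    by (simp add: \<beta>_def)
qed

text \<open>With \<open>\<gamma>, \<beta>, \<kappa>, \<nu>, \<epsilon>\<close> the valuations of \<open>M, D, c, 2, gcd X M\<close>: the divisibility
  \<open>M | 2 gcd(X, M) c\<close> gives \<open>\<gamma> \<le> \<nu> + \<epsilon> + \<kappa>\<close>, which suffices when \<open>2 \<epsilon> \<le> \<beta>\<close>; otherwise the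
  previous lemma gives \<open>\<gamma> \<le> \<beta>\<close>, and \<open>\<epsilon> \<le> \<kappa>\<close> since \<open>gcd(X, M) | c\<close>.\<close>

lemma multiplicity_sum_sq_bound:
  fixes X Y D M c p :: int
  assumes M: "M = X^2 + D * Y^2" and "D \<noteq> 0" "M \<noteq> 0" "coprime Y M" "c \<noteq> 0" "prime p"
    and "gcd X M dvd c" "M dvd 2 * gcd X M * c"
  shows "2 * multiplicity p M \<le> 2 * multiplicity p 2 + multiplicity p D + 2 * multiplicity p c"
proof -
  have "prime_elem p"
    using \<open>prime p\<close> by (rule prime_imp_prime_elem)
  define e where "e = gcd X M"
  have "e \<noteq> 0"
    using \<open>M \<noteq> 0\<close> by (simp add: e_def)
  define \<gamma> \<beta> \<kappa> \<nu> \<epsilon> where "\<gamma> = multiplicity p M" and "\<beta> = multiplicity p D"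
    and "\<kappa> = multiplicity p c" and "\<nu> = multiplicity p (2::int)" and "\<epsilon> = multiplicity p e"
  have "\<gamma> \<le> multiplicity p (2 * e * c)"
    unfolding \<gamma>_def using assms(8) \<open>e \<noteq> 0\<close> \<open>c \<noteq> 0\<close>
    by (intro dvd_imp_multiplicity_le) (simp_all add: e_def)
  then have "\<gamma> \<le> \<nu> + \<epsilon> + \<kappa>"
    using \<open>prime_elem p\<close> \<open>e \<noteq> 0\<close> \<open>c \<noteq> 0\<close>
    by (simp add: prime_elem_multiplicity_mult_distrib \<nu>_def \<epsilon>_def \<kappa>_def)
  moreover have "\<epsilon> \<le> \<kappa>"
    unfolding \<epsilon>_def \<kappa>_def e_def using assms(7) \<open>c \<noteq> 0\<close> by (rule dvd_imp_multiplicity_le)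
  moreover have "\<gamma> \<le> \<beta>" if "\<beta> < 2 * \<epsilon>" "\<gamma> > 0"
  proof -
    have "p dvd M"
      using that(2) not_dvd_imp_multiplicity_0[of p M] unfolding \<gamma>_def by auto
    moreover have "p ^ \<epsilon> dvd X"
      using multiplicity_dvd[of p e] unfolding \<epsilon>_def e_def by (meson dvd_trans gcd_dvd1)
    ultimately show ?thesis
      unfolding \<gamma>_def \<beta>_def using M \<open>D \<noteq> 0\<close> \<open>coprime Y M\<close> \<open>prime p\<close> that(1)
      by (intro multiplicity_le_if_sum_sq[where k = \<epsilon>]) (simp_all add: \<beta>_def)
  qed
  ultimately have "2 * \<gamma> \<le> 2 * \<nu> + \<beta> + 2 * \<kappa>"
    by (cases "\<beta> < 2 * \<epsilon> \<and> \<gamma> > 0") auto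
  then show ?thesis
    by (simp add: \<gamma>_def \<beta>_def \<kappa>_def \<nu>_def)
qed

lemma sq_dvd_four_mult_sq:
  fixes X Y D M c :: int
  assumes M: "M = X^2 + D * Y^2" and "D > 0" "coprime Y M" "c \<noteq> 0"
    and "gcd X M dvd c" "M dvd 2 * gcd X M * c"
  shows "M^2 dvd 4 * D * c^2"
proof (rule multiplicity_le_imp_dvd)
  have "M \<noteq> 0"
  proof
    assume "M = 0"
    then have "Y = 0"
      using M \<open>D > 0\<close> by (smt (verit) mult_pos_pos zero_le_power2 zero_less_power2)
    with \<open>M = 0\<close> \<open>coprime Y M\<close> show False
      by simp
  qed
  then show "M^2 \<noteq> 0"
    by simp
  fix p :: int
  assume p: "prime p"
  then have "prime_elem p"
    by (rule prime_imp_prime_elem)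
  have "multiplicity p ((2::int)^2) = 2 * multiplicity p 2"
    using \<open>prime_elem p\<close> by (intro prime_elem_multiplicity_power_distrib) simp_all
  then have "multiplicity p (4 * D * c^2) = 2 * multiplicity p 2 + multiplicity p D + 2 * multiplicity p c"
    using \<open>prime_elem p\<close> \<open>D > 0\<close> \<open>c \<noteq> 0\<close>
    by (simp add: prime_elem_multiplicity_mult_distrib prime_elem_multiplicity_power_distrib)
  moreover have "multiplicity p (M^2) = 2 * multiplicity p M"
    using \<open>prime_elem p\<close> \<open>M \<noteq> 0\<close> by (simp add: prime_elem_multiplicity_power_distrib)
  ultimately show "multiplicity p (M^2) \<le> multiplicity p (4 * D * c^2)"
    using multiplicity_sum_sq_bound[OF M _ \<open>M \<noteq> 0\<close> assms(3,4) p assms(5,6)] \<open>D > 0\<close> by simp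
qed

definition primitive_reps :: "int \<Rightarrow> int \<Rightarrow> (int \<times> int) set" where
  "primitive_reps D M = {(x, y). x^2 + D * y^2 = M \<and> coprime x y}"

lemma primitive_reps_subset: "primitive_reps D M \<subseteq> binary_reps 1 D M"
  by (auto simp: primitive_reps_def binary_reps_def)

lemma coprime_sum_sq:
  fixes x y D :: int
  assumes "coprime x y"
  shows "coprime y (x^2 + D * y^2)"
proof -
  have "gcd y ((D * y) * y + x^2) = gcd y (x^2)"
    by (rule gcd_add_mult)
  moreover have "coprime y (x^2)"
    using assms by (simp add: coprime_commute)
  ultimately show ?thesis
    by (simp add: coprime_iff_gcd_eq_1 add.commute mult.assoc power2_eq_square)
qed

lemma gcd_dvd_if_same_gcd:
  fixes M u u' y0 s t c :: int
  assumes "gcd u M = gcd u' M" "coprime y0 M" "y0 * c = s * u - t * u'"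
  shows "gcd u M dvd c"
proof -
  have "gcd u M dvd s * u - t * u'"
    using assms(1) by (metis dvd_diff dvd_mult gcd_dvd1)
  then have "gcd u M dvd y0 * c"
    using assms(3) by simp
  moreover have "coprime (gcd u M) y0"
    using assms(2) by (metis coprime_commute coprime_divisors dvd_refl gcd_dvd2)
  ultimately show ?thesis
    by (simp add: coprime_dvd_mult_right_iff)
qed

lemma cross_dvd_if_same_gcds:
  fixes D M x0 y0 x y x' y' :: int
  assumes rep0: "x0^2 + D * y0^2 = M" and "coprime y0 M" "D > 0"
    and rep: "x^2 + D * y^2 = M" "coprime x y" and rep': "x'^2 + D * y'^2 = M"
    and same_u: "gcd (x * y0 - x0 * y) M = gcd (x' * y0 - x0 * y') M"
    and same_v: "gcd (x * y0 + x0 * y) M = gcd (x' * y0 + x0 * y') M"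
    and same_x: "gcd x M = gcd x' M"
  shows "M^2 dvd 4 * D * (x * y' - x' * y)^2"
proof (cases "x * y' - x' * y = 0")
  case False
  define c u v where "c = x * y' - x' * y" and "u = x * y0 - x0 * y" and "v = x * y0 + x0 * y"
  define g h e where "g = gcd u M" and "h = gcd v M" and "e = gcd x M"
  have "u * v = (x^2 + D * y^2) * y0^2 - (x0^2 + D * y0^2) * y^2"
    by (simp add: u_def v_def power2_eq_square algebra_simps)
  also have "\<dots> = M * (y0^2 - y^2)"
    unfolding rep0 rep(1) by (simp add: algebra_simps)
  finally have "M dvd g * h"
    unfolding g_def h_def by (intro dvd_gcd_mult_gcd) simp
  moreover have "g dvd c"
    unfolding g_def u_def using same_u \<open>coprime y0 M\<close>
    by (rule gcd_dvd_if_same_gcd[where s = y' and t = y]) (simp add: c_def algebra_simps)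
  moreover have "h dvd c"
    unfolding h_def v_def using same_v \<open>coprime y0 M\<close>
    by (rule gcd_dvd_if_same_gcd[where s = y' and t = y]) (simp add: c_def algebra_simps)
  moreover have "gcd g h dvd 2 * e"
  proof -
    have "gcd g h dvd u + v" "gcd g h dvd M"
      unfolding g_def h_def by (meson dvd_add dvd_trans gcd_dvd1 gcd_dvd2)+
    moreover have "u + v = y0 * (2 * x)"
      by (simp add: u_def v_def algebra_simps)
    moreover have "coprime (gcd g h) y0"
      using \<open>gcd g h dvd M\<close> \<open>coprime y0 M\<close> by (metis coprime_commute coprime_divisors dvd_refl)
    ultimately have "gcd g h dvd gcd (2 * x) (2 * M)"
      by (simp add: coprime_dvd_mult_right_iff)
    then show ?thesis
      by (simp add: e_def gcd_mult_distrib_int[of 2, symmetric])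
  qed
  ultimately have "M dvd 2 * e * c"
    by (metis dvd_mult_if_dvd_mult_divisors)
  moreover have "e dvd c"
    unfolding e_def c_def using same_x by (metis dvd_diff dvd_mult2 gcd_dvd1)
  moreover have "coprime y M"
    using coprime_sum_sq[OF rep(2), of D] rep(1) by simp
  ultimately show ?thesis
    using sq_dvd_four_mult_sq[OF rep(1)[symmetric] \<open>D > 0\<close> _ False] by (simp add: c_def e_def)
qed simp

lemma card_primitive_reps_le:
  fixes D M :: int
  assumes "D > 0" "M > 0"
  shows "card (primitive_reps D M) \<le> 15 * divisor_count (nat M) ^ 3"
proof (cases "primitive_reps D M = {}")
  case False
  then obtain x0 y0 where rep0: "x0^2 + D * y0^2 = M" and "coprime x0 y0"
    by (auto simp: primitive_reps_def)
  then have "coprime y0 M"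
    using coprime_sum_sq by blast
  define key where "key = (\<lambda>(x, y). (gcd (x * y0 - x0 * y) M, gcd (x * y0 + x0 * y) M, gcd x M))"
  define Dv where "Dv = {c. 0 < c \<and> c dvd M}"
  define fiber where "fiber k = {z \<in> primitive_reps D M. key z = k}" for k
  have "key z \<in> Dv \<times> Dv \<times> Dv" for z
    using assms(2) by (auto simp: key_def Dv_def split: prod.split)
  then have decomposition: "primitive_reps D M = (\<Union>k \<in> Dv \<times> Dv \<times> Dv. fiber k)"
    by (auto simp: fiber_def)
  have fiber_le: "card (fiber k) \<le> 15" for k
  proof (rule card_le_15_if_cross_dvd[OF assms])
    show "fiber k \<subseteq> binary_reps 1 D M"
      using primitive_reps_subset by (auto simp: fiber_def)
    fix x y x' y'
    assume "(x, y) \<in> fiber k" "(x', y') \<in> fiber k"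
    then show "M^2 dvd 4 * D * (x * y' - x' * y)^2"
      using rep0 \<open>coprime y0 M\<close> \<open>D > 0\<close>
      by (intro cross_dvd_if_same_gcds) (auto simp: fiber_def primitive_reps_def key_def)
  qed
  have "finite (Dv \<times> Dv \<times> Dv)"
    using finite_pos_divisors_int[OF assms(2)] by (simp add: Dv_def)
  then have "card (primitive_reps D M) \<le> (\<Sum>k \<in> Dv \<times> Dv \<times> Dv. card (fiber k))"
    unfolding decomposition by (rule card_UN_le)
  also have "\<dots> \<le> (\<Sum>k \<in> Dv \<times> Dv \<times> Dv. 15)"
    using fiber_le by (rule sum_mono)
  also have "\<dots> = 15 * divisor_count (nat M) ^ 3"
    using card_pos_divisors_int[OF assms(2)] by (simp add: Dv_def card_cartesian_product power3_eq_cube)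
  finally show ?thesis .
qed simp

lemma binary_reps_principal_eq_UN_primitive:
  fixes D N :: int
  assumes "N \<noteq> 0"
  shows "binary_reps 1 D N
    = (\<Union>c \<in> {c. 0 < c \<and> c^2 dvd N}. (\<lambda>(x, y). (c * x, c * y)) ` primitive_reps D (N div c^2))"
    (is "_ = (\<Union>c \<in> ?I. ?scale c ` _)")
proof (intro equalityI subsetI)
  fix z
  assume "z \<in> binary_reps 1 D N"
  then obtain X Y where z: "z = (X, Y)" and rep: "X^2 + D * Y^2 = N"
    by (auto simp: binary_reps_def)
  then have "X \<noteq> 0 \<or> Y \<noteq> 0"
    using assms by auto
  define c where "c = gcd X Y"
  have "c > 0"
    using \<open>X \<noteq> 0 \<or> Y \<noteq> 0\<close> by (simp add: c_def)
  obtain x y where X: "X = c * x" and Y: "Y = c * y"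
    unfolding c_def by (meson gcd_dvd1 gcd_dvd2 dvdE)
  have "coprime (X div c) (Y div c)"
    unfolding c_def using \<open>X \<noteq> 0 \<or> Y \<noteq> 0\<close> by (rule div_gcd_coprime)
  then have "coprime x y"
    using X Y \<open>c > 0\<close> by simp
  have "N = c^2 * (x^2 + D * y^2)"
    using rep X Y by (simp add: algebra_simps)
  then have "c \<in> ?I" "N div c^2 = x^2 + D * y^2"
    using \<open>c > 0\<close> by simp_all
  then have "(x, y) \<in> primitive_reps D (N div c^2)"
    using \<open>coprime x y\<close> by (simp add: primitive_reps_def)
  then have "z \<in> ?scale c ` primitive_reps D (N div c^2)"
    using z X Y by auto
  with \<open>c \<in> ?I\<close> show "z \<in> (\<Union>c \<in> ?I. ?scale c ` primitive_reps D (N div c^2))"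
    by blast
next
  fix z
  assume "z \<in> (\<Union>c \<in> ?I. ?scale c ` primitive_reps D (N div c^2))"
  then obtain c x y where "c \<in> ?I" "x^2 + D * y^2 = N div c^2" "z = (c * x, c * y)"
    by (auto simp: primitive_reps_def)
  moreover have "(c * x)^2 + D * (c * y)^2 = c^2 * (x^2 + D * y^2)"
    by (simp add: algebra_simps)
  ultimately show "z \<in> binary_reps 1 D N"
    by (simp add: binary_reps_def)
qed

lemma card_principal_reps_le:
  fixes D N :: int
  assumes "D > 0" "N > 0"
  shows "card (binary_reps 1 D N) \<le> 15 * divisor_count (nat N) ^ 4"
proof -
  define I where "I = {c. 0 < c \<and> c^2 dvd N}"
  define scale where "scale c = (\<lambda>(x, y). (c * x, c * y))" for c :: int
  have scaled_le: "card (scale c ` primitive_reps D (N div c^2)) \<le> 15 * divisor_count (nat N) ^ 3"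
    if "c \<in> I" for c
  proof -
    from \<open>c \<in> I\<close> obtain k where N: "N = c^2 * k"
      by (auto simp: I_def)
    then have "k > 0" "N div c^2 = k"
      using \<open>c \<in> I\<close> assms(2) by (auto simp: I_def zero_less_mult_iff)
    have "finite (binary_reps 1 D k)"
      using assms(1) by (intro finite_binary_reps) simp_all
    then have "finite (primitive_reps D k)"
      using primitive_reps_subset by (rule finite_subset[rotated])
    then have "card (scale c ` primitive_reps D k) \<le> card (primitive_reps D k)"
      by (rule card_image_le)
    also have "\<dots> \<le> 15 * divisor_count (nat k) ^ 3"
      using assms(1) \<open>k > 0\<close> by (rule card_primitive_reps_le)
    also have "divisor_count (nat k) \<le> divisor_count (nat N)"
      using N \<open>k > 0\<close> assms(2) by (intro divisor_count_dvd_mono) (simp_all add: nat_dvd_iff)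
    then have "15 * divisor_count (nat k) ^ 3 \<le> 15 * divisor_count (nat N) ^ 3"
      by (simp add: power_mono)
    finally show ?thesis
      using \<open>N div c^2 = k\<close> by simp
  qed
  have "I \<subseteq> {c. 0 < c \<and> c dvd N}"
    by (auto simp: I_def power2_eq_square intro: dvd_mult_left)
  then have "finite I" "card I \<le> card {c. 0 < c \<and> c dvd N}"
    using finite_pos_divisors_int[OF assms(2)] by (auto intro: finite_subset card_mono)
  then have "card I \<le> divisor_count (nat N)"
    using card_pos_divisors_int[OF assms(2)] by simp
  have "card (binary_reps 1 D N) \<le> (\<Sum>c \<in> I. card (scale c ` primitive_reps D (N div c^2)))"
    unfolding binary_reps_principal_eq_UN_primitive[OF \<open>N > 0\<close>[THEN less_imp_neq, symmetric]]
    using \<open>finite I\<close> by (simp add: I_def scale_def card_UN_le)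
  also have "\<dots> \<le> (\<Sum>c \<in> I. 15 * divisor_count (nat N) ^ 3)"
    using scaled_le by (rule sum_mono)
  also have "\<dots> \<le> 15 * divisor_count (nat N) ^ 4"
    using \<open>card I \<le> divisor_count (nat N)\<close> by (simp add: power_numeral_reduce mult.left_commute)
  finally show ?thesis .
qed

lemma card_binary_reps_le_powr:
  fixes \<delta> :: real
  assumes "\<delta> > 0"
  shows "\<exists>C\<ge>1. \<forall>a b m. a > 0 \<longrightarrow> b > 0 \<longrightarrow> m > 0 \<longrightarrow>
    real (card (binary_reps a b m)) \<le> C * real_of_int m powr \<delta>"
proof -
  obtain C1 where C1: "\<And>n. n > 0 \<Longrightarrow> real (divisor_count n) \<le> C1 * real n powr (\<delta> / 8)"
    using divisor_count_le_powr[of "\<delta> / 8"] assms by auto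
  define C where "C = max 1 (15 * C1 ^ 4)"
  have "real (card (binary_reps a b m)) \<le> C * real_of_int m powr \<delta>"
    if "a > 0" "b > 0" "m > 0" for a b m
  proof -
    have "real (nat (m^2)) powr (\<delta> / 8) = (real_of_int m * real_of_int m) powr (\<delta> / 8)"
      using that(3) by (simp add: power2_eq_square)
    also have "\<dots> = real_of_int m powr (\<delta> / 8) * real_of_int m powr (\<delta> / 8)"
      using that(3) by (simp add: powr_mult)
    also have "\<dots> = real_of_int m powr (\<delta> / 4)"
      by (simp flip: powr_add)
    finally have "real (nat (m^2)) powr (\<delta> / 8) = real_of_int m powr (\<delta> / 4)" .
    then have divisors: "real (divisor_count (nat (m^2))) \<le> C1 * real_of_int m powr (\<delta> / 4)"
      using C1[of "nat (m^2)"] that(3) by simp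
    have "card (binary_reps a b m) \<le> card (binary_reps 1 (a * b) (m^2))"
      using that by (intro card_binary_reps_le_principal) simp_all
    also have "\<dots> \<le> 15 * divisor_count (nat (m^2)) ^ 4"
      using that by (intro card_principal_reps_le) simp_all
    finally have "real (card (binary_reps a b m)) \<le> 15 * real (divisor_count (nat (m^2))) ^ 4"
      by (metis of_nat_le_iff of_nat_mult of_nat_numeral of_nat_power)
    also have "\<dots> \<le> 15 * (C1 * real_of_int m powr (\<delta> / 4)) ^ 4"
      using divisors by (intro mult_left_mono power_mono) simp_all
    also have "\<dots> = 15 * C1 ^ 4 * real_of_int m powr \<delta>"
      using that(3) by (simp add: power_mult_distrib powr_power)
    also have "\<dots> \<le> C * real_of_int m powr \<delta>"
      unfolding C_def by (intro mult_right_mono) simp_all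
    finally show ?thesis .
  qed
  moreover have "C \<ge> 1"
    by (simp add: C_def)
  ultimately show ?thesis
    by blast
qed

definition qform :: "int list \<Rightarrow> int list \<Rightarrow> int" where
  "qform as ks = (\<Sum>i<length as. as ! i * (ks ! i)^2)"

definition reps :: "int list \<Rightarrow> int \<Rightarrow> int list set" where
  "reps as m = {ks. length ks = length as \<and> qform as ks = m}"

lemma rQ_eq_card_reps: "rQ as n = card (reps as (int n))"
  by (simp add: rQ_def reps_def qform_def)

lemma qform_Cons: "qform (a # as) (k # ks) = a * k^2 + qform as ks"
  unfolding qform_def length_Cons sum.lessThan_Suc_shift by simp

lemma qform_nonneg: "\<forall>a\<in>set as. a \<ge> 0 \<Longrightarrow> qform as ks \<ge> 0"
  unfolding qform_def by (intro sum_nonneg) simp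

lemma reps_Cons:
  assumes "\<forall>a\<in>set as. a \<ge> 0"
  shows "reps (a # as) m = (\<Union>k \<in> {k. a * k^2 \<le> m}. (#) k ` reps as (m - a * k^2))"
proof (intro equalityI subsetI)
  fix ks
  assume "ks \<in> reps (a # as) m"
  then obtain k ks' where ks: "ks = k # ks'" "length ks' = length as" "a * k^2 + qform as ks' = m"
    by (cases ks) (auto simp: reps_def qform_Cons)
  moreover have "qform as ks' \<ge> 0"
    using assms by (rule qform_nonneg)
  ultimately have "a * k^2 \<le> m" "ks \<in> (#) k ` reps as (m - a * k^2)"
    by (auto simp: reps_def)
  then show "ks \<in> (\<Union>k \<in> {k. a * k^2 \<le> m}. (#) k ` reps as (m - a * k^2))"
    by blast
qed (auto simp: reps_def qform_Cons)

lemma card_reps_pair: "card (reps [a, b] m) = card (binary_reps a b m)"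
proof -
  have "reps [a, b] m = (\<lambda>(x, y). [x, y]) ` binary_reps a b m"
    by (auto simp: reps_def binary_reps_def qform_def length_Suc_conv numeral_2_eq_2)
  moreover have "inj (\<lambda>(x, y). [x, y :: int])"
    by (auto intro: injI)
  ultimately show ?thesis
    by (simp add: card_image inj_on_subset)
qed

lemma card_reps_Cons_le:
  fixes B :: real and n m :: int
  assumes "a > 0" "\<forall>x\<in>set as. x \<ge> 0" "n \<ge> 1" "m \<le> n"
    and bound: "\<And>m'. m' \<le> n \<Longrightarrow> real (card (reps as m')) \<le> B"
  shows "real (card (reps (a # as) m)) \<le> 3 * sqrt (real_of_int n) * B"
proof -
  define K where "K = {k. a * k^2 \<le> m}"
  have "B \<ge> 0"
    using bound[of n] by (meson of_nat_0_le_iff order.refl order.trans)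
  have "K \<subseteq> {k. k^2 \<le> n}"
  proof
    fix k
    assume "k \<in> K"
    moreover have "k^2 \<le> a * k^2"
      using assms(1) by (simp add: mult_le_cancel_right1)
    ultimately show "k \<in> {k. k^2 \<le> n}"
      using assms(4) by (simp add: K_def)
  qed
  then have "finite K" "card K \<le> card {k. k^2 \<le> n}"
    using finite_squares_le by (auto intro: finite_subset card_mono)
  then have card_K: "real (card K) \<le> 3 * sqrt (real_of_int n)"
    using card_squares_le[OF assms(3)] by linarith
  have "reps (a # as) m = (\<Union>k\<in>K. (#) k ` reps as (m - a * k^2))"
    unfolding K_def using assms(2) by (rule reps_Cons)
  then have "card (reps (a # as) m) \<le> (\<Sum>k\<in>K. card ((#) k ` reps as (m - a * k^2)))"
    using card_UN_le[OF \<open>finite K\<close>] by simp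
  also have "\<dots> = (\<Sum>k\<in>K. card (reps as (m - a * k^2)))"
    by (simp add: card_image)
  finally have "real (card (reps (a # as) m)) \<le> (\<Sum>k\<in>K. real (card (reps as (m - a * k^2))))"
    by (simp flip: of_nat_sum)
  also have "\<dots> \<le> (\<Sum>k\<in>K. B)"
  proof (rule sum_mono)
    fix k
    have "0 \<le> a * k^2"
      using assms(1) by simp
    then show "real (card (reps as (m - a * k^2))) \<le> B"
      using assms(4) by (intro bound) linarith
  qed
  also have "\<dots> \<le> 3 * sqrt (real_of_int n) * B"
    using card_K \<open>B \<ge> 0\<close> by (simp add: mult_right_mono)
  finally show ?thesis .
qed

lemma card_reps_pair_le:
  fixes C \<delta> :: real and n m :: int
  assumes "C \<ge> 1" "\<delta> \<ge> 0" "n \<ge> 1" "m \<le> n" "a > 0" "b > 0"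
    and binary: "\<And>a b m. a > 0 \<Longrightarrow> b > 0 \<Longrightarrow> m > 0 \<Longrightarrow>
      real (card (binary_reps a b m)) \<le> C * real_of_int m powr \<delta>"
  shows "real (card (reps [a, b] m)) \<le> C * real_of_int n powr \<delta>"
proof (cases "m > 0")
  case True
  then have "real (card (binary_reps a b m)) \<le> C * real_of_int m powr \<delta>"
    using assms(5,6) by (rule binary[rotated 2])
  also have "\<dots> \<le> C * real_of_int n powr \<delta>"
    using True assms(1,2,4) by (intro mult_left_mono powr_mono2) auto
  finally show ?thesis
    by (simp add: card_reps_pair)
next
  case False
  then have "card (binary_reps a b m) \<le> 1"
    using assms(5,6) by (intro card_binary_reps_nonpos) auto
  then have "real (card (binary_reps a b m)) \<le> 1 * 1"
    by simp
  also have "\<dots> \<le> C * real_of_int n powr \<delta>"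
    using assms(1-3) by (intro mult_mono) (simp_all add: ge_one_powr_ge_zero)
  finally show ?thesis
    by (simp add: card_reps_pair)
qed

lemma card_reps_le_powr:
  fixes C \<delta> :: real and n :: int
  assumes "C \<ge> 1" "\<delta> \<ge> 0" "n \<ge> 1"
    and binary: "\<And>a b m. a > 0 \<Longrightarrow> b > 0 \<Longrightarrow> m > 0 \<Longrightarrow>
      real (card (binary_reps a b m)) \<le> C * real_of_int m powr \<delta>"
  shows "length as \<ge> 2 \<Longrightarrow> \<forall>a\<in>set as. a > 0 \<Longrightarrow> m \<le> n \<Longrightarrow>
    real (card (reps as m)) \<le> C * 3 ^ (length as - 2) * real_of_int n powr (real (length as) / 2 - 1 + \<delta>)"
proof (induction as arbitrary: m)
  case (Cons a as)
  show ?case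
  proof (cases "length as \<ge> 2")
    case True
    define e where "e = real (length as) / 2 - 1 + \<delta>"
    have "real (card (reps (a # as) m))
        \<le> 3 * sqrt (real_of_int n) * (C * 3 ^ (length as - 2) * real_of_int n powr e)"
      using Cons.prems assms(3) True unfolding e_def
      by (intro card_reps_Cons_le Cons.IH) auto
    also have "\<dots> = C * (3 * 3 ^ (length as - 2)) * real_of_int n powr (1 / 2 + e)"
      using assms(3) by (simp add: powr_half_sqrt powr_add mult_ac)
    also have "\<dots> = C * 3 ^ (length (a # as) - 2)
        * real_of_int n powr (real (length (a # as)) / 2 - 1 + \<delta>)"
    proof -
      have "1 / 2 + e = real (length (a # as)) / 2 - 1 + \<delta>"
        by (simp add: e_def field_simps)
      moreover have "3 * 3 ^ (length as - 2) = (3::real) ^ (length (a # as) - 2)"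
        using True by (simp add: Suc_diff_le flip: power_Suc)
      ultimately show ?thesis
        by (simp only:)
    qed
    finally show ?thesis .
  next
    case False
    then obtain b where "as = [b]"
      using Cons.prems(1) by (cases as) (auto simp: le_Suc_eq)
    then show ?thesis
      using card_reps_pair_le[OF assms(1-3) Cons.prems(3) _ _ binary] Cons.prems(2) by simp
  qed
qed simp

theorem lemma3p5:
  fixes d :: nat
  assumes "d \<ge> 2"
  shows "\<exists>\<delta>0>0. \<forall>\<delta>::real. 0 < \<delta> \<and> \<delta> < \<delta>0 \<longrightarrow>
           (\<exists>C::real. \<forall>as::int list. length as = d \<and> (\<forall>a\<in>set as. a > 0) \<longrightarrow>
              (\<forall>n::nat. n \<ge> 1 \<longrightarrow>
                 real (rQ as n) \<le> C * real n powr (real d / 2 - 1 + \<delta>)))"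
proof -
  have "\<exists>C::real. \<forall>as::int list. length as = d \<and> (\<forall>a\<in>set as. a > 0) \<longrightarrow>
      (\<forall>n::nat. n \<ge> 1 \<longrightarrow> real (rQ as n) \<le> C * real n powr (real d / 2 - 1 + \<delta>))"
    if "\<delta> > 0" for \<delta> :: real
  proof -
    obtain C where "C \<ge> 1" and binary: "\<forall>a b m. a > 0 \<longrightarrow> b > 0 \<longrightarrow> m > 0 \<longrightarrow>
        real (card (binary_reps a b m)) \<le> C * real_of_int m powr \<delta>"
      using card_binary_reps_le_powr[OF \<open>\<delta> > 0\<close>] by blast
    have "real (rQ as n) \<le> C * 3 ^ (d - 2) * real n powr (real d / 2 - 1 + \<delta>)"
      if "length as = d" "\<forall>a\<in>set as. a > 0" "n \<ge> 1" for as n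
      using card_reps_le_powr[OF \<open>C \<ge> 1\<close> _ _ _, of \<delta> "int n" as "int n"] binary that assms \<open>\<delta> > 0\<close>
      by (simp add: rQ_eq_card_reps)
    then show ?thesis
      by blast
  qed
  then show ?thesis
    by (intro exI[of _ 1]) auto
qed

end
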